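(* Consider a market with $M$ consumers $\mathcal{M}=\{1,\dots,M\}$ and $N$ suppliers $\mathcal{N}=\{1,\dots,N\}$, constants $d_0>0$, $\kappa_0>0$ with $Md_0<N\kappa_0$. For each $i\in\mathcal{M}$, $U_i$ is concave, strictly increasing and continuously differentiable on $[d_0,\infty)$ with $U_i(d_0)=0$; for each $i\in\mathcal{N}$, $C_i:\mathbb{R}\to\mathbb{R}$ is convex, strictly increasing and continuously differentiable with $C_i(s)\ge0$ for $s\ge0$ and $C_i(s)=0$ for $s\le0$. Define the game $\mathcal{G}$ whose players are $\mathcal{M}\cup\mathcal{N}$; consumer $i$ chooses $\theta_d^i\ge0$ and supplier $i$ chooses $\theta_s^i\ge 0$. For a profile $(\boldsymbol{\theta}_d,\boldsymbol{\theta}_s)$ with $\sum_i\theta_d^i+\sum_i\theta_s^i>0$, the price is $p(\boldsymbol{\theta}_d,\boldsymbol{\theta}_s)=\frac{\sum_i\theta_d^i+\sum_i\theta_s^i}{N\kappa_0-Md_0}$ and the payoffs are $$\pi_d^i=U_i\!\left(d_0+\frac{\theta_d^i}{p}\right)-p\,d_0-\theta_d^i\ (i\in\mathcal{M}),\qquad \pi_s^i=p\,\kappa_0-\theta_s^i-C_i\!\left(\kappa_0-\frac{\theta_s^i}{p}\right)\ (i\in\mathcal{N}),$$ with $p=p(\boldsymbol{\theta}_d,\boldsymbol{\theta}_s)$. If all parameters are zero, by convention each consumer is allocated $d_0$, each supplier $\kappa_0$, and the price is $0$ (so consumer payoffs are $U_i(d_0)=0$ and supplier payoffs are $-C_i(\kappa_0)$).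 Suppose some supplier is pivotal, i.e. $\frac{(N-1)\kappa_0}{Md_0}<1$. Then $\mathcal{G}$ admits no (pure) Nash equilibrium.
   Context: A Nash equilibrium is a profile $(\tilde{\boldsymbol{\theta}}_d,\tilde{\boldsymbol{\theta}}_s)$ of nonnegative parameters such that no consumer and no supplier can strictly increase its own payoff by unilaterally changing its own parameter to another nonnegative value. The quantity $\frac{(N-1)\kappa_0}{Md_0}$ is the residual supply index of a supplier. *)

theory Defs
  imports "HOL-Analysis.Analysis"
begin

text \<open>Consumers are indexed by {..<M}, suppliers by {..<N}. A profile is a pair of
  functions td, ts :: nat => real (only the values on the index sets matter).\<close>

definition total_bid :: "nat \<Rightarrow> nat \<Rightarrow> (nat \<Rightarrow> real) \<Rightarrow> (nat \<Rightarrow> real) \<Rightarrow> real" where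
  "total_bid M N td ts = (\<Sum>i<M. td i) + (\<Sum>i<N. ts i)"

definition price :: "nat \<Rightarrow> nat \<Rightarrow> real \<Rightarrow> real \<Rightarrow> (nat \<Rightarrow> real) \<Rightarrow> (nat \<Rightarrow> real) \<Rightarrow> real" where
  "price M N d0 k0 td ts =
     (if total_bid M N td ts = 0 then 0
      else total_bid M N td ts / (real N * k0 - real M * d0))"

definition payoff_d :: "(nat \<Rightarrow> real \<Rightarrow> real) \<Rightarrow> nat \<Rightarrow> nat \<Rightarrow> real \<Rightarrow> real
    \<Rightarrow> (nat \<Rightarrow> real) \<Rightarrow> (nat \<Rightarrow> real) \<Rightarrow> nat \<Rightarrow> real" where
  "payoff_d U M N d0 k0 td ts i =
     (if total_bid M N td ts = 0 then U i d0
      else (let p = price M N d0 k0 td ts in U i (d0 + td i / p) - p * d0 - td i))"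

definition payoff_s :: "(nat \<Rightarrow> real \<Rightarrow> real) \<Rightarrow> nat \<Rightarrow> nat \<Rightarrow> real \<Rightarrow> real
    \<Rightarrow> (nat \<Rightarrow> real) \<Rightarrow> (nat \<Rightarrow> real) \<Rightarrow> nat \<Rightarrow> real" where
  "payoff_s C M N d0 k0 td ts i =
     (if total_bid M N td ts = 0 then - C i k0
      else (let p = price M N d0 k0 td ts in p * k0 - ts i - C i (k0 - ts i / p)))"

definition nash_eq :: "(nat \<Rightarrow> real \<Rightarrow> real) \<Rightarrow> (nat \<Rightarrow> real \<Rightarrow> real) \<Rightarrow> nat \<Rightarrow> nat
    \<Rightarrow> real \<Rightarrow> real \<Rightarrow> (nat \<Rightarrow> real) \<Rightarrow> (nat \<Rightarrow> real) \<Rightarrow> bool" where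
  "nash_eq U C M N d0 k0 td ts \<longleftrightarrow>
     (\<forall>i<M. td i \<ge> 0) \<and> (\<forall>i<N. ts i \<ge> 0) \<and>
     (\<forall>i<M. \<forall>x\<ge>0. \<not> (payoff_d U M N d0 k0 (td(i := x)) ts i > payoff_d U M N d0 k0 td ts i)) \<and>
     (\<forall>i<N. \<forall>x\<ge>0. \<not> (payoff_s C M N d0 k0 td (ts(i := x)) i > payoff_s C M N d0 k0 td ts i))"

definition C1_on :: "real set \<Rightarrow> (real \<Rightarrow> real) \<Rightarrow> bool" where
  "C1_on S f \<longleftrightarrow> (\<exists>f'. (\<forall>x\<in>S. (f has_real_derivative f' x) (at x within S)) \<and> continuous_on S f')"

end

theory Submission
  imports Defs
begin

text \<open>A pivotal supplier faces a residual market of size \<open>N\<kappa>\<^sub>0 - Md\<^sub>0 < \<kappa>\<^sub>0\<close>.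
  If it raises its own bid to \<open>x\<close> while the others keep theirs, the price becomes at least
  \<open>x / (N\<kappa>\<^sub>0 - Md\<^sub>0)\<close> and the amount it withholds, \<open>x / p\<close>, stays below \<open>\<kappa>\<^sub>0\<close>, so its payoff is
  at least \<open>x (\<kappa>\<^sub>0 / (N\<kappa>\<^sub>0 - Md\<^sub>0) - 1) - C(\<kappa>\<^sub>0)\<close>. This grows without bound in \<open>x\<close>, so
  the supplier never has a best response and no profile is a Nash equilibrium.\<close>

lemma sum_lessThan_fun_upd:
  fixes f :: "nat \<Rightarrow> 'a::ab_group_add"
  assumes "j < n"
  shows "(\<Sum>i<n. (f(j := x)) i) = (\<Sum>i<n. f i) - f j + x"
proof -
  have j: "j \<in> {..<n}" using assms by simp
  have "(\<Sum>i\<in>{..<n} - {j}. (f(j := x)) i) = (\<Sum>i\<in>{..<n} - {j}. f i)"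
    by (rule sum.cong) auto
  then show ?thesis
    using sum.remove[OF _ j, of "f(j := x)"] sum.remove[OF _ j, of f] by simp
qed

lemma total_bid_supplier_upd:
  "j < N \<Longrightarrow> total_bid M N td (ts(j := x)) = total_bid M N td ts - ts j + x"
  by (simp add: total_bid_def sum_lessThan_fun_upd del: fun_upd_apply)

lemma total_bid_minus_supplier_nonneg:
  assumes "j < N" "\<forall>i<M. td i \<ge> 0" "\<forall>i<N. ts i \<ge> 0"
  shows "total_bid M N td ts - ts j \<ge> 0"
proof -
  have "ts j \<le> (\<Sum>i<N. ts i)"
    using assms(1,3) by (intro member_le_sum) auto
  moreover have "(\<Sum>i<M. td i) \<ge> 0"
    using assms(2) by (intro sum_nonneg) auto
  ultimately show ?thesis by (simp add: total_bid_def)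
qed

lemma payoff_s_supplier_upd_lower_bound:
  fixes C :: "nat \<Rightarrow> real \<Rightarrow> real" and M N :: nat and d0 k0 :: real
  defines "D \<equiv> real N * k0 - real M * d0"
  assumes D: "0 < D" "D \<le> k0"
    and "j < N" "\<forall>i<M. td i \<ge> 0" "\<forall>i<N. ts i \<ge> 0" "x > 0"
    and mono: "mono_on {0..} (C j)"
  shows "payoff_s C M N d0 k0 td (ts(j := x)) j \<ge> x * (k0 / D - 1) - C j k0"
proof -
  define R where "R = total_bid M N td ts - ts j"
  have R: "R \<ge> 0"
    unfolding R_def using assms(4-6) by (rule total_bid_minus_supplier_nonneg)
  have total: "total_bid M N td (ts(j := x)) = R + x"
    using \<open>j < N\<close> by (simp add: total_bid_supplier_upd R_def)
  define p where "p = (R + x) / D"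
  have p: "price M N d0 k0 td (ts(j := x)) = p"
    using total R \<open>x > 0\<close> by (simp add: price_def p_def D_def)
  have withheld: "x / p \<le> D"
  proof -
    have "x / p = x * D / (R + x)"
      using D R \<open>x > 0\<close> by (simp add: p_def field_simps)
    also have "\<dots> \<le> D"
      using D R \<open>x > 0\<close> by (simp add: divide_le_eq mult_left_mono)
    finally show ?thesis .
  qed
  have cost: "C j (k0 - x / p) \<le> C j k0"
  proof (rule mono_onD[OF mono])
    show "k0 - x / p \<in> {0..}" using withheld D by simp
    show "k0 \<in> {0..}" using D by simp
    show "k0 - x / p \<le> k0" using D R \<open>x > 0\<close> by (simp add: p_def)
  qed
  have revenue: "p * k0 \<ge> x * (k0 / D)"
    using D R by (simp add: p_def divide_right_mono mult_right_mono)
  have "payoff_s C M N d0 k0 td (ts(j := x)) j = p * k0 - x - C j (k0 - x / p)"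
    using total R \<open>x > 0\<close> p by (simp add: payoff_s_def Let_def)
  with cost revenue show ?thesis by (simp add: algebra_simps)
qed

lemma payoff_s_supplier_unbounded:
  fixes C :: "nat \<Rightarrow> real \<Rightarrow> real"
  assumes D: "0 < real N * k0 - real M * d0" "real N * k0 - real M * d0 < k0"
    and "j < N" "\<forall>i<M. td i \<ge> 0" "\<forall>i<N. ts i \<ge> 0"
    and "mono_on {0..} (C j)"
  shows "\<exists>x>0. payoff_s C M N d0 k0 td (ts(j := x)) j > V"
proof -
  define a where "a = k0 / (real N * k0 - real M * d0) - 1"
  have a: "a > 0" using D by (simp add: a_def)
  define x where "x = (\<bar>V\<bar> + \<bar>C j k0\<bar> + 1) / a"
  have x: "x > 0" using a by (simp add: x_def add_pos_nonneg)
  have "x * a - C j k0 > V" using a by (simp add: x_def)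
  moreover have "payoff_s C M N d0 k0 td (ts(j := x)) j \<ge> x * a - C j k0"
    unfolding a_def using assms x by (intro payoff_s_supplier_upd_lower_bound) auto
  ultimately show ?thesis using x by auto
qed

theorem lemma1:
  fixes U C :: "nat \<Rightarrow> real \<Rightarrow> real" and M N :: nat and d0 k0 :: real
  assumes "M \<ge> 1" and "N \<ge> 1"
    and "d0 > 0" and "k0 > 0" and "real M * d0 < real N * k0"
    and "\<And>i. i < M \<Longrightarrow> concave_on {d0..} (U i)"
    and "\<And>i. i < M \<Longrightarrow> strict_mono_on {d0..} (U i)"
    and "\<And>i. i < M \<Longrightarrow> C1_on {d0..} (U i)"
    and "\<And>i. i < M \<Longrightarrow> U i d0 = 0"
    and "\<And>i. i < N \<Longrightarrow> convex_on UNIV (C i)"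
    and "\<And>i. i < N \<Longrightarrow> strict_mono_on {0..} (C i)"
    and "\<And>i. i < N \<Longrightarrow> C1_on UNIV (C i)"
    and "\<And>i s. i < N \<Longrightarrow> s \<ge> 0 \<Longrightarrow> C i s \<ge> 0"
    and "\<And>i s. i < N \<Longrightarrow> s \<le> 0 \<Longrightarrow> C i s = 0"
    and pivotal: "(real N - 1) * k0 / (real M * d0) < 1"
  shows "\<not> (\<exists>td ts. nash_eq U C M N d0 k0 td ts)"
proof
  assume "\<exists>td ts. nash_eq U C M N d0 k0 td ts"
  then obtain td ts where eq: "nash_eq U C M N d0 k0 td ts" by blast
  have "0 < N" using assms(2) by simp
  have bids: "\<forall>i<M. td i \<ge> 0" "\<forall>i<N. ts i \<ge> 0"
    and no_gain: "\<forall>x\<ge>0. \<not> payoff_s C M N d0 k0 td (ts(0 := x)) 0 > payoff_s C M N d0 k0 td ts 0"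
    using eq \<open>0 < N\<close> unfolding nash_eq_def by auto
  have "real M * d0 > 0" using assms(1,3) by simp
  with pivotal have residual: "real N * k0 - real M * d0 < k0"
    by (simp add: divide_less_eq algebra_simps)
  have "0 < real N * k0 - real M * d0" using assms(5) by simp
  moreover have "mono_on {0..} (C 0)"
    using assms(11)[OF \<open>0 < N\<close>] by (rule strict_mono_on_imp_mono_on)
  ultimately obtain x where "x > 0"
    and "payoff_s C M N d0 k0 td (ts(0 := x)) 0 > payoff_s C M N d0 k0 td ts 0"
    using payoff_s_supplier_unbounded[OF _ residual \<open>0 < N\<close> bids] by blast
  with no_gain show False by auto
qed

end
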